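(* Let $N\ge1$, $d\ge1$, $\varepsilon>0$, $(c_\ell)_{-N\le\ell\le N}\in\mathbb{C}^{2N+1}$, $\alpha,\beta\in\mathbb{C}^d$, and let $\mathcal L(t,\mathbf x,\dot{\mathbf x})$ be a lagrangian, continuous in $t\in[a,b]$ and continuously complex-differentiable in $(\mathbf x,\dot{\mathbf x})\in\mathbb{C}^d\times\mathbb{C}^d$. Let $\mathbf x\in\mathcal C_{pw}(d,N,\alpha,\beta)$ be a critical point of the discrete action \[ \mathcal A_{disc}(\mathbf x)=\int_a^b\mathcal L(t,\mathbf x(t),\Box_\varepsilon\mathbf x(t))\,dt, \] i.e. $\frac{d}{d\eta}\big|_{\eta=0}\mathcal A_{disc}(\mathbf x+\eta\mathbf h)=0$ for every $\mathbf h\in\mathcal C_{pw}(d,N,0,0)$. Then for every $j\in\{1,\dots,d\}$, \[ \Box_{-\varepsilon}\Big[\frac{\partial\mathcal L}{\partial\dot x_j}(\cdot,\mathbf x(\cdot),\Box_\varepsilon\mathbf x(\cdot))\Big](t)+\frac{\partial\mathcal L}{\partial x_j}(t,\mathbf x(t),\Box_\varepsilon\mathbf x(t))=0 \] for (almost) every $t\in[a,b]$; explicitly, $\sum_{\ell=-N}^{N}c_\ell\,\chi_\ell(t)\,\frac{\partial\mathcal L}{\partial\dot x_j}\big(t-\ell\varepsilon,\mathbf x(t-\ell\varepsilon),\Box_\varepsilon\mathbf x(t-\ell\varepsilon)\big)+\frac{\partial\mathcal L}{\partial x_j}(t,\mathbf x(t),\Box_\varepsilon\mathbf x(t))=0$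.
   Context: Fix $[a,b]$ and $\varepsilon>0$. For each integer $\ell$, $\chi_\ell$ is the indicator function of $[\max(a,a+\ell\varepsilon),\min(b,b+\ell\varepsilon)]$; a term multiplied by a vanishing $\chi_\ell$ is taken to be $0$. For $\alpha,\beta\in\mathbb{C}^d$, $\mathcal C_{pw}(d,N,\alpha,\beta)$ is the set of functions $\mathbf x:[a,b]\to\mathbb{C}^d$ with $\mathbf x(a)=\alpha$, $\mathbf x(b)=\beta$, continuous on each interval $[a+\ell\varepsilon,a+(\ell+1)\varepsilon]\cap[a,b]$, $\ell\in\mathbb{Z}$ (with the topology of uniform convergence). Given coefficients $(c_\ell)_{-N\le \ell\le N}$, the generalized scale derivative is \[ \Box_\varepsilon\mathbf x(t)=\sum_{\ell=-N}^{N}c_\ell\,\mathbf x(t+\ell\varepsilon)\chi_{-\ell}(t),\qquad t\in[a,b], \] acting componentwise, and $\Box_{-\varepsilon}$ denotes the operator obtained by replacing $\varepsilon$ with $-\varepsilon$ while keeping the same coefficients $c_\ell$: \[ \Box_{-\varepsilon}\mathbf f(t)=\sum_{\ell=-N}^{N}c_\ell\,\mathbf f(t-\ell\varepsilon)\chi_{\ell}(t). \] *)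

theory Defs
  imports "HOL-Analysis.Analysis"
begin

definition chi_set :: "real \<Rightarrow> real \<Rightarrow> real \<Rightarrow> int \<Rightarrow> real set" where
  "chi_set a b eps l = {max a (a + of_int l * eps) .. min b (b + of_int l * eps)}"

definition box_eps ::
  "real \<Rightarrow> real \<Rightarrow> real \<Rightarrow> nat \<Rightarrow> (int \<Rightarrow> complex) \<Rightarrow> (real \<Rightarrow> complex^'d) \<Rightarrow> real \<Rightarrow> complex^'d" where
  "box_eps a b eps N c x t =
     (\<chi> j. \<Sum>l\<in>{-int N..int N}.
        (if t \<in> chi_set a b eps (-l) then c l * (x (t + of_int l * eps) $ j) else 0))"

text \<open>The operator with eps replaced by -eps (same coefficients), on scalar functions.\<close>
definition box_meps ::
  "real \<Rightarrow> real \<Rightarrow> real \<Rightarrow> nat \<Rightarrow> (int \<Rightarrow> complex) \<Rightarrow> (real \<Rightarrow> complex) \<Rightarrow> real \<Rightarrow> complex" where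
  "box_meps a b eps N c f t =
     (\<Sum>l\<in>{-int N..int N}.
        (if t \<in> chi_set a b eps l then c l * f (t - of_int l * eps) else 0))"

definition Cpw :: "real \<Rightarrow> real \<Rightarrow> real \<Rightarrow> complex^'d \<Rightarrow> complex^'d \<Rightarrow> (real \<Rightarrow> complex^'d) set" where
  "Cpw a b eps alpha beta =
     {x. x a = alpha \<and> x b = beta \<and>
         (\<forall>l::int. continuous_on ({a + of_int l * eps .. a + (of_int l + 1) * eps} \<inter> {a..b}) x)}"

definition action_disc ::
  "real \<Rightarrow> real \<Rightarrow> real \<Rightarrow> nat \<Rightarrow> (int \<Rightarrow> complex)
   \<Rightarrow> (real \<Rightarrow> complex^'d \<Rightarrow> complex^'d \<Rightarrow> complex) \<Rightarrow> (real \<Rightarrow> complex^'d) \<Rightarrow> complex" where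
  "action_disc a b eps N c L x = integral {a..b} (\<lambda>t. L t (x t) (box_eps a b eps N c x t))"

definition upd_vec :: "complex^'d \<Rightarrow> 'd \<Rightarrow> complex \<Rightarrow> complex^'d" where
  "upd_vec x j z = (\<chi> i. if i = j then z else x $ i)"

definition dL_dx :: "(real \<Rightarrow> complex^'d \<Rightarrow> complex^'d \<Rightarrow> complex) \<Rightarrow> 'd \<Rightarrow> real \<Rightarrow> complex^'d \<Rightarrow> complex^'d \<Rightarrow> complex" where
  "dL_dx L j t x v = deriv (\<lambda>z. L t (upd_vec x j z) v) (x $ j)"

definition dL_dv :: "(real \<Rightarrow> complex^'d \<Rightarrow> complex^'d \<Rightarrow> complex) \<Rightarrow> 'd \<Rightarrow> real \<Rightarrow> complex^'d \<Rightarrow> complex^'d \<Rightarrow> complex" where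
  "dL_dv L j t x v = deriv (\<lambda>z. L t x (upd_vec v j z)) (v $ j)"

end

theory Submission
  imports Defs
begin

(* Fix a coordinate j; let P(t), Q(t) be the partial derivatives of L in x_j and in the
   j-th velocity component along the critical point x.  On scalar functions the scale
   derivative box_eps is box_meps with eps replaced by -eps, and the proof has three steps.
   (1) First variation.  For a continuous scalar phi vanishing at a and b, h = phi e_j lies in
       C_pw(0,0) and box_eps (x + eta h) = box_eps x + eta (box_eps phi) e_j.  A first-order
       expansion of L, uniform on compacta (mean value theorem in the two coordinates j),
       justifies differentiating the action under the integral sign, so criticality gives
       integral (P phi + Q box_eps phi) = 0.
   (2) Discrete integration by parts.  box_eps and box_meps are adjoint on [a,b]: the
       substitution s = t + l eps moves each term of the finite sum across, so
       integral (Q box_eps phi) = integral ((box_meps Q) phi).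
   (3) Fundamental lemma.  A bounded measurable g integrating to zero against all such phi
       vanishes a.e. on [a,b] (plateau test functions, dominated convergence and Lebesgue
       differentiation); apply it to g = box_meps Q + P.
   The file develops coordinate updates and the scale derivatives, the integration tools,
   the adjointness (2), the uniform expansion of L, the fundamental lemma (3), continuity
   of C_pw and a clamping device giving global measurability, and then the argument along x
   in the locale critical_point; the theorem follows coordinate by coordinate. *)

lemma upd_vec_nth [simp]: "upd_vec y j z $ i = (if i = j then z else y $ i)"
  by (simp add: upd_vec_def)

lemma upd_vec_same [simp]: "upd_vec y j (y $ j) = y"
  by (simp add: upd_vec_def vec_eq_iff)

lemma upd_vec_upd_vec [simp]: "upd_vec (upd_vec y j z) j w = upd_vec y j w"
  by (simp add: upd_vec_def vec_eq_iff)

lemma add_scaleR_upd_vec_zero: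
  "y + \<eta> *\<^sub>R upd_vec 0 j z = upd_vec (y :: complex^'d) j (y $ j + of_real \<eta> * z)"
  by (simp add: vec_eq_iff scaleR_conv_of_real[where 'a=complex])

lemma norm_axis_complex: "norm (axis j (w::complex)) = norm w"
proof -
  have "(\<Sum>i\<in>UNIV. (norm (axis j w $ i))\<^sup>2) = (\<Sum>i\<in>UNIV. if i = j then (norm w)\<^sup>2 else 0)"
    by (rule sum.cong) (auto simp: axis_def)
  then show ?thesis by (simp add: norm_vec_def L2_set_def)
qed

lemma norm_upd_vec_diff: "norm (upd_vec y j z - y) = norm (z - y $ j)"
proof -
  have "upd_vec y j z - y = axis j (z - y $ j)"
    by (simp add: vec_eq_iff axis_def)
  then show ?thesis by (simp add: norm_axis_complex)
qed

lemma continuous_on_upd_vec [continuous_intros]: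
  assumes "continuous_on S f" "continuous_on S g"
  shows "continuous_on S (\<lambda>t. upd_vec (f t) j (g t))"
  unfolding upd_vec_def
proof (intro continuous_on_vec_lambda)
  fix i show "continuous_on S (\<lambda>t. if i = j then g t else f t $ i)"
    by (cases "i = j") (auto intro!: continuous_intros assms)
qed

lemma chi_set_subset: "chi_set a b eps l \<subseteq> {a..b}"
  by (auto simp: chi_set_def)

lemma chi_set_shift: "t \<in> chi_set a b eps l \<Longrightarrow> t - of_int l * eps \<in> {a..b}"
  by (auto simp: chi_set_def)

lemma chi_set_minus_eps: "chi_set a b (-eps) l = chi_set a b eps (-l)"
  by (simp add: chi_set_def)

lemma box_eps_component:
  "box_eps a b eps N c x t $ j = box_meps a b (-eps) N c (\<lambda>s. x s $ j) t"
  unfolding box_eps_def box_meps_def chi_set_minus_eps by (auto intro!: sum.cong)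

lemma box_eps_variation:
  "box_eps a b eps N c (\<lambda>t. x t + \<eta> *\<^sub>R upd_vec 0 j (\<phi> t)) t
     = upd_vec (box_eps a b eps N c x t) j
         (box_eps a b eps N c x t $ j + of_real \<eta> * box_meps a b (-eps) N c \<phi> t)"
proof -
  have lin: "box_meps a b e N c (\<lambda>s. f s + k * g s) t
      = box_meps a b e N c f t + k * box_meps a b e N c g t" for e f g and k :: complex
    unfolding box_meps_def sum_distrib_left sum.distrib[symmetric]
    by (intro sum.cong) (auto simp: algebra_simps)
  have "box_meps a b (-eps) N c (\<lambda>s. if i = j then x s $ j + of_real \<eta> * \<phi> s else x s $ i) t
      = (if i = j then box_meps a b (-eps) N c (\<lambda>s. x s $ j) t + of_real \<eta> * box_meps a b (-eps) N c \<phi> t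
         else box_meps a b (-eps) N c (\<lambda>s. x s $ i) t)"
    for i by (cases "i = j") (simp_all add: lin)
  then show ?thesis
    by (simp add: vec_eq_iff box_eps_component add_scaleR_upd_vec_zero)
qed

lemma measurable_shift:
  fixes f :: "real \<Rightarrow> 'b::topological_space"
  assumes "f \<in> borel_measurable borel"
  shows "(\<lambda>t. f (t + s)) \<in> borel_measurable borel"
  by (rule measurable_compose[OF _ assms]) (intro borel_measurable_continuous_onI continuous_intros)

lemma box_meps_measurable:
  assumes "f \<in> borel_measurable borel"
  shows "box_meps a b e N c f \<in> borel_measurable borel"
proof -
  have "box_meps a b e N c f
      = (\<lambda>t. \<Sum>l\<in>{-int N..int N}. indicator (chi_set a b e l) t *\<^sub>R (c l * f (t + - (of_int l * e))))"
    by (auto simp: box_meps_def fun_eq_iff indicator_def intro!: sum.cong)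
  also have "\<dots> \<in> borel_measurable borel"
    by (intro borel_measurable_sum borel_measurable_scaleR borel_measurable_times measurable_shift[OF assms])
       (auto simp: chi_set_def)
  finally show ?thesis .
qed

lemma box_eps_measurable:
  fixes X :: "real \<Rightarrow> complex^'d"
  assumes "X \<in> borel_measurable borel"
  shows "box_eps a b eps N c X \<in> borel_measurable borel"
proof -
  have smult: "continuous_on UNIV (\<lambda>v::complex^'d. k *s v)" for k
    unfolding vector_scalar_mult_def by (intro continuous_intros)
  have "box_eps a b eps N c X
      = (\<lambda>t. \<Sum>l\<in>{-int N..int N}. indicator (chi_set a b eps (-l)) t *\<^sub>R (c l *s X (t + of_int l * eps)))"
    by (auto simp: box_eps_def fun_eq_iff vec_eq_iff sum_component indicator_def intro!: sum.cong)
  also have "\<dots> \<in> borel_measurable borel"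
    by (intro borel_measurable_sum borel_measurable_scaleR
          measurable_compose[OF measurable_shift[OF assms] borel_measurable_continuous_onI[OF smult]])
       (auto simp: chi_set_def)
  finally show ?thesis .
qed

text \<open>A bound on [a,b] bounds the scale derivative everywhere, since it only samples [a,b].\<close>
lemma box_meps_bound:
  assumes "\<And>t. t \<in> {a..b} \<Longrightarrow> norm (f t) \<le> B" "B \<ge> 0"
  shows "norm (box_meps a b e N c f t) \<le> (\<Sum>l\<in>{-int N..int N}. norm (c l)) * B"
proof -
  have "norm (box_meps a b e N c f t)
      \<le> (\<Sum>l\<in>{-int N..int N}. norm (if t \<in> chi_set a b e l then c l * f (t - of_int l * e) else 0))"
    unfolding box_meps_def by (rule norm_sum)
  also have "\<dots> \<le> (\<Sum>l\<in>{-int N..int N}. norm (c l) * B)"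
    by (intro sum_mono) (auto simp: norm_mult intro!: mult_left_mono mult_nonneg_nonneg assms chi_set_shift)
  finally show ?thesis by (simp add: sum_distrib_right)
qed

lemma integrable_if_measurable_bounded:
  fixes f :: "real \<Rightarrow> 'b::euclidean_space"
  assumes "f \<in> borel_measurable borel" "\<And>t. t \<in> {a..b} \<Longrightarrow> norm (f t) \<le> B"
  shows "f integrable_on {a..b}"
proof (rule measurable_bounded_by_integrable_imp_integrable[where g = "\<lambda>_. B"])
  show "f \<in> borel_measurable (lebesgue_on {a..b})"
    using assms(1) by (simp add: measurable_completion measurable_restrict_space1 measurable_lborel2)
qed (use assms in auto)

lemma integrable_product_if_measurable_bounded:
  fixes f g :: "real \<Rightarrow> complex"
  assumes "f \<in> borel_measurable borel" "g \<in> borel_measurable borel"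
    and "\<And>t. t \<in> {a..b} \<Longrightarrow> norm (f t) \<le> A" "\<And>t. t \<in> {a..b} \<Longrightarrow> norm (g t) \<le> B"
  shows "(\<lambda>t. f t * g t) integrable_on {a..b}"
proof (rule integrable_if_measurable_bounded[where B = "A * B"])
  show "(\<lambda>t. f t * g t) \<in> borel_measurable borel"
    using assms(1,2) by measurable
  show "norm (f t * g t) \<le> A * B" if "t \<in> {a..b}" for t
    unfolding norm_mult using assms(3,4)[OF that]
    by (intro mult_mono) (auto intro: order_trans[OF norm_ge_zero])
qed

lemma integral_supported_subset:
  fixes f :: "real \<Rightarrow> 'b::banach"
  assumes "\<And>t. t \<notin> {a..b} \<Longrightarrow> f t = 0" "{a..b} \<subseteq> S"
  shows "integral S f = integral {a..b} f"
proof -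
  have "(\<lambda>t. if t \<in> S then f t else 0) = (\<lambda>t. if t \<in> {a..b} then f t else 0)"
    using assms by (auto simp: fun_eq_iff)
  then show ?thesis by (metis integral_restrict_UNIV)
qed

lemma integral_shift_supported:
  fixes f :: "real \<Rightarrow> 'b::banach"
  assumes f: "\<And>t. t \<notin> {a..b} \<Longrightarrow> f t = 0" and fh: "\<And>t. t \<notin> {a..b} \<Longrightarrow> f (t + h) = 0"
  shows "integral {a..b} (\<lambda>t. f (t + h)) = integral {a..b} f"
proof -
  define A B where "A = a - \<bar>h\<bar>" and "B = b + \<bar>h\<bar>"
  have "integral {a..b} (\<lambda>t. f (t + h)) = integral {A - h..B - h} (\<lambda>t. f (t + h))"
    by (rule integral_supported_subset[symmetric]) (use fh in \<open>auto simp: A_def B_def\<close>)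
  also have "\<dots> = integral {A..B} f"
    by (rule integral_shift_real_ivl)
  also have "\<dots> = integral {a..b} f"
    by (rule integral_supported_subset) (use f in \<open>auto simp: A_def B_def\<close>)
  finally show ?thesis .
qed

lemma has_vector_derivative_integral_at_0:
  fixes F :: "real \<Rightarrow> real \<Rightarrow> 'b::euclidean_space"
  assumes ab: "a \<le> b" and F_int: "\<And>\<eta>. F \<eta> integrable_on {a..b}" and D_int: "D integrable_on {a..b}"
    and expansion: "\<And>e. e > 0 \<Longrightarrow> \<exists>\<delta>>0. \<forall>\<eta> t. \<bar>\<eta>\<bar> < \<delta> \<longrightarrow> t \<in> {a..b} \<longrightarrow>
                      norm (F \<eta> t - F 0 t - \<eta> *\<^sub>R D t) \<le> e * \<bar>\<eta>\<bar>"
  shows "((\<lambda>\<eta>. integral {a..b} (F \<eta>)) has_vector_derivative integral {a..b} D) (at 0)"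
  unfolding has_vector_derivative_def has_derivative_at_alt
proof (intro conjI allI impI bounded_linear_scaleR_left)
  fix e :: real assume e: "e > 0"
  then obtain \<delta> where \<delta>: "\<delta> > 0" "\<And>\<eta> t. \<bar>\<eta>\<bar> < \<delta> \<Longrightarrow> t \<in> {a..b} \<Longrightarrow>
      norm (F \<eta> t - F 0 t - \<eta> *\<^sub>R D t) \<le> e / (b - a + 1) * \<bar>\<eta>\<bar>"
    using expansion[of "e / (b - a + 1)"] ab by auto
  have "norm (integral {a..b} (F \<eta>) - integral {a..b} (F 0) - (\<eta> - 0) *\<^sub>R integral {a..b} D)
          \<le> e * norm (\<eta> - 0)" if \<eta>: "norm (\<eta> - 0) < \<delta>" for \<eta>
  proof -
    have "integral {a..b} (\<lambda>t. F \<eta> t - F 0 t - \<eta> *\<^sub>R D t)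
        = integral {a..b} (\<lambda>t. F \<eta> t - F 0 t) - integral {a..b} (\<lambda>t. \<eta> *\<^sub>R D t)"
      using F_int D_int by (intro integral_diff integrable_diff integrable_cmul)
    then have "integral {a..b} (F \<eta>) - integral {a..b} (F 0) - (\<eta> - 0) *\<^sub>R integral {a..b} D
        = integral {a..b} (\<lambda>t. F \<eta> t - F 0 t - \<eta> *\<^sub>R D t)"
      using F_int by (simp add: integral_diff)
    also have "norm \<dots> \<le> e / (b - a + 1) * \<bar>\<eta>\<bar> * measure lborel (cbox a b)"
    proof (rule has_integral_bound)
      show "((\<lambda>t. F \<eta> t - F 0 t - \<eta> *\<^sub>R D t) has_integral
              integral {a..b} (\<lambda>t. F \<eta> t - F 0 t - \<eta> *\<^sub>R D t)) (cbox a b)"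
        using F_int D_int by (simp add: integrable_integral integrable_diff integrable_cmul)
    qed (use \<delta>(2) \<eta> e ab in auto)
    also have "\<dots> \<le> e * \<bar>\<eta>\<bar>"
      using ab e by (simp add: field_simps mult_left_mono)
    finally show ?thesis by simp
  qed
  then show "\<exists>d>0. \<forall>\<eta>. norm (\<eta> - 0) < d \<longrightarrow>
      norm (integral {a..b} (F \<eta>) - integral {a..b} (F 0) - (\<eta> - 0) *\<^sub>R integral {a..b} D) \<le> e * norm (\<eta> - 0)"
    using \<delta>(1) by blast
qed

subsection \<open>Discrete integration by parts\<close>

lemma chi_set_minus_eps_shift: "t - of_int l * e \<in> chi_set a b (-e) l \<longleftrightarrow> t \<in> chi_set a b e l"
  by (auto simp: chi_set_def)

text \<open>The operators box_eps (on scalars: box_meps with -e) and box_meps are adjoint in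
  L2(a,b): each term of the finite sum is moved across by the substitution s = t + l e.\<close>
lemma box_meps_adjoint:
  fixes Q \<phi> :: "real \<Rightarrow> complex"
  assumes meas: "Q \<in> borel_measurable borel" "\<phi> \<in> borel_measurable borel"
    and bound: "\<And>t. t \<in> {a..b} \<Longrightarrow> norm (Q t) \<le> B" "\<And>t. t \<in> {a..b} \<Longrightarrow> norm (\<phi> t) \<le> B"
  shows "integral {a..b} (\<lambda>t. Q t * box_meps a b (-e) N c \<phi> t)
       = integral {a..b} (\<lambda>t. box_meps a b e N c Q t * \<phi> t)"
proof -
  define u where "u l t = indicator (chi_set a b (-e) l) t *\<^sub>R (c l * \<phi> (t + of_int l * e) * Q t)" for l t
  define w where "w l t = indicator (chi_set a b e l) t *\<^sub>R (c l * Q (t - of_int l * e) * \<phi> t)" for l t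
  have term_int: "(\<lambda>t. indicator S t *\<^sub>R (k * f (t + s) * g t)) integrable_on {a..b}"
    if f: "f \<in> borel_measurable borel" "\<And>t. t \<in> {a..b} \<Longrightarrow> norm (f t) \<le> B"
      and g: "g \<in> borel_measurable borel" "\<And>t. t \<in> {a..b} \<Longrightarrow> norm (g t) \<le> B"
      and S: "closed S" "\<And>t. t \<in> S \<Longrightarrow> t + s \<in> {a..b}"
    for S k s and f g :: "real \<Rightarrow> complex"
  proof (rule integrable_if_measurable_bounded[where B = "norm k * B * B"])
    show "(\<lambda>t. indicator S t *\<^sub>R (k * f (t + s) * g t)) \<in> borel_measurable borel"
      using g(1) S(1) by (intro borel_measurable_scaleR borel_measurable_times measurable_shift[OF f(1)]) auto
    show "norm (indicator S t *\<^sub>R (k * f (t + s) * g t)) \<le> norm k * B * B" if t: "t \<in> {a..b}" for t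
    proof (cases "t \<in> S")
      case True
      have "norm (indicator S t *\<^sub>R (k * f (t + s) * g t)) = norm k * norm (f (t + s)) * norm (g t)"
        using True by (simp add: norm_mult)
      also have "\<dots> \<le> norm k * B * B"
        using f(2)[OF S(2)[OF True]] g(2)[OF t]
        by (intro mult_mono mult_left_mono) (auto intro: order_trans[OF norm_ge_zero] mult_nonneg_nonneg)
      finally show ?thesis .
    qed (use g(2)[OF t] in \<open>auto intro: order_trans[OF norm_ge_zero] mult_nonneg_nonneg\<close>)
  qed
  have u_int: "u l integrable_on {a..b}" for l
    unfolding u_def using meas bound chi_set_shift[of _ a b "-e" l]
    by (intro term_int) (auto simp: chi_set_def)
  have w_int: "w l integrable_on {a..b}" for l
    unfolding w_def using meas bound chi_set_shift[of _ a b e l]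
    by (intro term_int[of Q \<phi> _ "- (of_int l * e)", simplified]) (auto simp: chi_set_def)
  have "integral {a..b} (w l) = integral {a..b} (u l)" for l
  proof -
    have w_shift: "w l = (\<lambda>t. u l (t + - (of_int l * e)))"
      by (auto simp: fun_eq_iff u_def w_def indicator_def chi_set_minus_eps_shift[simplified])
    have "integral {a..b} (\<lambda>t. u l (t + - (of_int l * e))) = integral {a..b} (u l)"
    proof (rule integral_shift_supported)
      show "u l t = 0" if "t \<notin> {a..b}" for t
        using that subsetD[OF chi_set_subset[of a b "-e" l]] by (auto simp: u_def indicator_def)
      show "u l (t + - (of_int l * e)) = 0" if "t \<notin> {a..b}" for t
      proof -
        have "u l (t + - (of_int l * e)) = w l t" by (simp add: w_shift)
        then show ?thesis
          using that subsetD[OF chi_set_subset[of a b e l]] by (auto simp: w_def indicator_def)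
      qed
    qed
    then show ?thesis by (simp only: w_shift)
  qed
  moreover have "(\<lambda>t. Q t * box_meps a b (-e) N c \<phi> t) = (\<lambda>t. \<Sum>l\<in>{-int N..int N}. u l t)"
    by (auto simp: fun_eq_iff box_meps_def u_def sum_distrib_left indicator_def intro!: sum.cong)
  moreover have "(\<lambda>t. box_meps a b e N c Q t * \<phi> t) = (\<lambda>t. \<Sum>l\<in>{-int N..int N}. w l t)"
    by (auto simp: fun_eq_iff box_meps_def w_def sum_distrib_right indicator_def intro!: sum.cong)
  ultimately show ?thesis
    using u_int w_int by (simp add: integral_sum)
qed

subsection \<open>A uniform first-order expansion of the lagrangian\<close>

lemma linearisation_error_on_segment:
  fixes f :: "complex \<Rightarrow> complex"
  assumes diff: "\<And>z. z \<in> closed_segment u (u + p) \<Longrightarrow> f field_differentiable (at z)"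
    and close: "\<And>z. z \<in> closed_segment u (u + p) \<Longrightarrow> norm (deriv f z - A) \<le> e"
  shows "norm (f (u + p) - f u - A * p) \<le> e * norm p"
proof -
  have "norm ((f (u + p) - A * (u + p)) - (f u - A * u)) \<le> e * norm ((u + p) - u)"
  proof (rule field_differentiable_bound[where f' = "\<lambda>z. deriv f z - A"])
    fix z assume z: "z \<in> closed_segment u (u + p)"
    have "((\<lambda>z. f z - A * z) has_field_derivative deriv f z - A * 1) (at z)"
      using diff[OF z] by (auto intro!: derivative_eq_intros field_differentiable_derivI)
    then show "((\<lambda>z. f z - A * z) has_field_derivative deriv f z - A) (at z within closed_segment u (u + p))"
      by (simp add: has_field_derivative_at_within)
  qed (use close in auto)
  then show ?thesis by (simp add: algebra_simps)
qed

lemma coordinate_increment_estimate: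
  fixes L :: "real \<Rightarrow> complex^'d \<Rightarrow> complex^'d \<Rightarrow> complex"
  assumes hol_x: "\<And>y v. (\<lambda>z. L t (upd_vec y j z) v) field_differentiable (at (y $ j))"
    and hol_v: "\<And>y v. (\<lambda>z. L t y (upd_vec v j z)) field_differentiable (at (v $ j))"
    and close_x: "\<And>z. z \<in> closed_segment (y $ j) (y $ j + p) \<Longrightarrow>
               norm (dL_dx L j t (upd_vec y j z) (upd_vec v j (v $ j + q)) - A) \<le> e"
    and close_v: "\<And>w. w \<in> closed_segment (v $ j) (v $ j + q) \<Longrightarrow>
               norm (dL_dv L j t y (upd_vec v j w) - B) \<le> e"
  shows "norm (L t (upd_vec y j (y $ j + p)) (upd_vec v j (v $ j + q)) - L t y v - (A * p + B * q))
          \<le> e * (norm p + norm q)"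
proof -
  define v' where "v' = upd_vec v j (v $ j + q)"
  have step_x: "norm (L t (upd_vec y j (y $ j + p)) v' - L t y v' - A * p) \<le> e * norm p"
  proof -
    have "norm (L t (upd_vec y j (y $ j + p)) v' - L t (upd_vec y j (y $ j)) v' - A * p) \<le> e * norm p"
    proof (rule linearisation_error_on_segment[where f = "\<lambda>z. L t (upd_vec y j z) v'"])
      fix z
      show "(\<lambda>z. L t (upd_vec y j z) v') field_differentiable (at z)"
        using hol_x[of "upd_vec y j z" v'] by simp
      assume "z \<in> closed_segment (y $ j) (y $ j + p)"
      then show "norm (deriv (\<lambda>z. L t (upd_vec y j z) v') z - A) \<le> e"
        using close_x[of z] by (simp add: dL_dx_def v'_def)
    qed
    then show ?thesis by simp
  qed
  have step_v: "norm (L t y v' - L t y v - B * q) \<le> e * norm q"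
  proof -
    have "norm (L t y (upd_vec v j (v $ j + q)) - L t y (upd_vec v j (v $ j)) - B * q) \<le> e * norm q"
    proof (rule linearisation_error_on_segment[where f = "\<lambda>w. L t y (upd_vec v j w)"])
      fix w
      show "(\<lambda>w. L t y (upd_vec v j w)) field_differentiable (at w)"
        using hol_v[of y "upd_vec v j w"] by simp
      assume "w \<in> closed_segment (v $ j) (v $ j + q)"
      then show "norm (deriv (\<lambda>w. L t y (upd_vec v j w)) w - B) \<le> e"
        using close_v[of w] by (simp add: dL_dv_def)
    qed
    then show ?thesis by (simp add: v'_def)
  qed
  have split: "L t (upd_vec y j (y $ j + p)) v' - L t y v - (A * p + B * q)
      = (L t (upd_vec y j (y $ j + p)) v' - L t y v' - A * p) + (L t y v' - L t y v - B * q)"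
    by (simp add: algebra_simps)
  have "norm (L t (upd_vec y j (y $ j + p)) v' - L t y v - (A * p + B * q))
      \<le> norm (L t (upd_vec y j (y $ j + p)) v' - L t y v' - A * p) + norm (L t y v' - L t y v - B * q)"
    unfolding split by (rule norm_triangle_ineq)
  also have "\<dots> \<le> e * norm p + e * norm q"
    using step_x step_v by (rule add_mono)
  finally show ?thesis by (simp add: v'_def distrib_left)
qed

lemma dist_same_time_le:
  "dist (t::real, y'::'a::metric_space, v'::'b::metric_space) (t, y, v) \<le> dist y' y + dist v' v"
proof -
  have "dist (t, y', v') (t, y, v) = sqrt ((dist y' y)\<^sup>2 + (dist v' v)\<^sup>2)"
    by (simp add: dist_Pair_Pair)
  also have "\<dots> \<le> dist y' y + dist v' v"
    using sqrt_sum_squares_le_sum_abs[of "dist y' y" "dist v' v"] by simp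
  finally show ?thesis .
qed

text \<open>This uses the uniform continuity of the partial derivatives on compacta.\<close>
lemma lagrangian_uniform_expansion:
  fixes L :: "real \<Rightarrow> complex^'d \<Rightarrow> complex^'d \<Rightarrow> complex"
  assumes T: "compact T"
    and hol_x: "\<And>t y v. t \<in> T \<Longrightarrow> (\<lambda>z. L t (upd_vec y j z) v) field_differentiable (at (y $ j))"
    and hol_v: "\<And>t y v. t \<in> T \<Longrightarrow> (\<lambda>z. L t y (upd_vec v j z)) field_differentiable (at (v $ j))"
    and cont_x: "continuous_on (T \<times> UNIV \<times> UNIV) (\<lambda>(t, y, v). dL_dx L j t y v)"
    and cont_v: "continuous_on (T \<times> UNIV \<times> UNIV) (\<lambda>(t, y, v). dL_dv L j t y v)"
    and e: "e > 0"
  shows "\<exists>\<delta>>0. \<forall>t\<in>T. \<forall>y v p q. norm y \<le> R \<longrightarrow> norm v \<le> R \<longrightarrow> norm p \<le> \<delta> \<longrightarrow> norm q \<le> \<delta> \<longrightarrow>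
       norm (L t (upd_vec y j (y $ j + p)) (upd_vec v j (v $ j + q)) - L t y v
             - (dL_dx L j t y v * p + dL_dv L j t y v * q)) \<le> e * (norm p + norm q)"
proof -
  define K where "K = T \<times> cball (0::complex^'d) (R + 1) \<times> cball (0::complex^'d) (R + 1)"
  have K: "compact K" unfolding K_def using T by (intro compact_Times compact_cball)
  obtain dx where dx: "dx > 0" "\<And>p p'. p \<in> K \<Longrightarrow> p' \<in> K \<Longrightarrow> dist p' p < dx \<Longrightarrow>
      dist ((\<lambda>(t, y, v). dL_dx L j t y v) p') ((\<lambda>(t, y, v). dL_dx L j t y v) p) < e"
    using compact_uniformly_continuous[OF continuous_on_subset[OF cont_x] K] e
    unfolding uniformly_continuous_on_def by (metis K_def subset_UNIV Sigma_mono order_refl)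
  obtain dv where dv: "dv > 0" "\<And>p p'. p \<in> K \<Longrightarrow> p' \<in> K \<Longrightarrow> dist p' p < dv \<Longrightarrow>
      dist ((\<lambda>(t, y, v). dL_dv L j t y v) p') ((\<lambda>(t, y, v). dL_dv L j t y v) p) < e"
    using compact_uniformly_continuous[OF continuous_on_subset[OF cont_v] K] e
    unfolding uniformly_continuous_on_def by (metis K_def subset_UNIV Sigma_mono order_refl)
  define \<delta> where "\<delta> = min 1 (min dx dv / 3)"
  have \<delta>: "\<delta> > 0" "\<delta> \<le> 1" "2 * \<delta> < dx" "2 * \<delta> < dv"
    using dx dv by (auto simp: \<delta>_def)
  have near: "(t, y', v') \<in> K \<and> (t, y, v) \<in> K \<and> dist (t, y', v') (t, y, v) \<le> 2 * \<delta>"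
    if "t \<in> T" "norm y \<le> R" "norm v \<le> R" "norm (y' - y) \<le> \<delta>" "norm (v' - v) \<le> \<delta>" for t y v y' v'
  proof -
    have "norm y' \<le> norm y + norm (y' - y)" "norm v' \<le> norm v + norm (v' - v)"
      using norm_triangle_sub[of y' y] norm_triangle_sub[of v' v] by (simp_all add: add.commute)
    then show ?thesis
      using that dist_same_time_le[of t y' v' y v] \<delta>(2) by (auto simp: K_def dist_norm)
  qed
  show ?thesis
  proof (intro exI[of _ \<delta>] conjI ballI allI impI \<delta>(1))
    fix t and y v :: "complex^'d" and p q :: complex
    assume t: "t \<in> T" and y: "norm y \<le> R" and v: "norm v \<le> R" and p: "norm p \<le> \<delta>" and q: "norm q \<le> \<delta>"
    show "norm (L t (upd_vec y j (y $ j + p)) (upd_vec v j (v $ j + q)) - L t y v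
             - (dL_dx L j t y v * p + dL_dv L j t y v * q)) \<le> e * (norm p + norm q)"
    proof (rule coordinate_increment_estimate)
      fix z assume "z \<in> closed_segment (y $ j) (y $ j + p)"
      then have "norm (upd_vec y j z - y) \<le> \<delta>"
        using segment_bound(1)[of z "y $ j" "y $ j + p"] p by (simp add: norm_upd_vec_diff)
      then have "dist (dL_dx L j t (upd_vec y j z) (upd_vec v j (v $ j + q))) (dL_dx L j t y v) < e"
        using near[OF t y v, of "upd_vec y j z" "upd_vec v j (v $ j + q)"] q \<delta>(3) dx(2)
        by (force simp: norm_upd_vec_diff)
      then show "norm (dL_dx L j t (upd_vec y j z) (upd_vec v j (v $ j + q)) - dL_dx L j t y v) \<le> e"
        by (simp add: dist_norm)
    next
      fix w assume "w \<in> closed_segment (v $ j) (v $ j + q)"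
      then have "norm (upd_vec v j w - v) \<le> \<delta>"
        using segment_bound(1)[of w "v $ j" "v $ j + q"] q by (simp add: norm_upd_vec_diff)
      then have "dist (dL_dv L j t y (upd_vec v j w)) (dL_dv L j t y v) < e"
        using near[OF t y v, of y "upd_vec v j w"] \<delta>(1,4) dv(2) by force
      then show "norm (dL_dv L j t y (upd_vec v j w) - dL_dv L j t y v) \<le> e"
        by (simp add: dist_norm)
    qed (use hol_x[OF t] hol_v[OF t] in auto)
  qed
qed

subsection \<open>The fundamental lemma of the calculus of variations\<close>

definition plateau :: "real \<Rightarrow> real \<Rightarrow> nat \<Rightarrow> real \<Rightarrow> real" where
  "plateau c d k s = min 1 (max 0 (real (Suc k) * (s - c))) * min 1 (max 0 (real (Suc k) * (d - s)))"

lemma plateau_continuous: "continuous_on UNIV (plateau c d k)"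
  unfolding plateau_def by (intro continuous_intros)

lemma plateau_abs_le_1: "\<bar>plateau c d k s\<bar> \<le> 1"
  unfolding plateau_def by (auto simp: abs_mult intro!: mult_le_one)

lemma plateau_outside:
  assumes "s \<le> c \<or> d \<le> s"
  shows "plateau c d k s = 0"
proof -
  have "real (Suc k) * (s - c) \<le> 0 \<or> real (Suc k) * (d - s) \<le> 0"
    using assms by (auto simp: mult_nonneg_nonpos)
  then show ?thesis by (auto simp: plateau_def)
qed

lemma plateau_tendsto: "(\<lambda>k. plateau c d k s) \<longlonglongrightarrow> (if c < s \<and> s < d then 1 else 0)"
proof (cases "c < s \<and> s < d")
  case True
  obtain K :: nat where K: "max (1 / (s - c)) (1 / (d - s)) < real K"
    using reals_Archimedean2 by blast
  have "plateau c d k s = 1" if "K \<le> k" for k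
  proof -
    have "1 / (s - c) < real (Suc k)" "1 / (d - s) < real (Suc k)"
      using K that by (auto simp: max_less_iff_conj intro: less_le_trans)
    then have "1 \<le> real (Suc k) * (s - c)" "1 \<le> real (Suc k) * (d - s)"
      using True by (simp_all add: field_simps)
    then show ?thesis by (simp add: plateau_def)
  qed
  then have "eventually (\<lambda>k. plateau c d k s = 1) sequentially"
    unfolding eventually_sequentially by blast
  then show ?thesis
    using True by (simp add: tendsto_eventually)
next
  case False
  then have "plateau c d k s = 0" for k
    by (intro plateau_outside) auto
  then show ?thesis using False by auto
qed

text \<open>If g integrates to zero against all continuous test functions vanishing at a and b,
  then its integral over every subinterval of [a,b] vanishes: test against the plateau
  functions and pass to the limit by dominated convergence.\<close>
lemma integral_subinterval_eq_0:
  fixes g :: "real \<Rightarrow> complex"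
  assumes gm: "g \<in> borel_measurable borel" and gb: "\<And>t. norm (g t) \<le> B"
    and weak: "\<And>\<phi>. continuous_on UNIV \<phi> \<Longrightarrow> \<phi> a = 0 \<Longrightarrow> \<phi> b = 0 \<Longrightarrow>
                 integral {a..b} (\<lambda>t. g t * \<phi> t) = 0"
    and cd: "a \<le> c" "d \<le> b"
  shows "integral {c..d} g = 0"
proof (cases "c < d")
  case True
  define \<phi> where "\<phi> k s = complex_of_real (plateau c d k s)" for k s
  define g_cd where "g_cd t = (if c < t \<and> t < d then g t else 0)" for t
  have \<phi>_cont: "continuous_on UNIV (\<phi> k)" for k
    unfolding \<phi>_def by (intro continuous_intros continuous_on_compose2[OF plateau_continuous]) auto
  have \<phi>_ends: "\<phi> k a = 0" "\<phi> k b = 0" for k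
    using cd by (simp_all add: \<phi>_def plateau_outside)
  have dominated: "norm (g t * \<phi> k t) \<le> B" for k t
  proof -
    have "norm (g t * \<phi> k t) = norm (g t) * \<bar>plateau c d k t\<bar>"
      by (simp add: \<phi>_def norm_mult)
    also have "\<dots> \<le> B * 1"
      by (intro mult_mono gb plateau_abs_le_1) (auto intro: order_trans[OF norm_ge_zero gb])
    finally show ?thesis by simp
  qed
  have "(\<lambda>k. integral {a..b} (\<lambda>t. g t * \<phi> k t)) \<longlonglongrightarrow> integral {a..b} g_cd"
  proof (rule dominated_convergence(2)[where h = "\<lambda>_. B"])
    show "(\<lambda>t. g t * \<phi> k t) integrable_on {a..b}" for k
      using gm borel_measurable_continuous_onI[OF \<phi>_cont] dominated
      by (intro integrable_if_measurable_bounded[where B = B]) auto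
    show "(\<lambda>k. g t * \<phi> k t) \<longlonglongrightarrow> g_cd t" for t
      using tendsto_mult_left[OF tendsto_of_real[OF plateau_tendsto], of "g t" c d t]
      by (simp add: \<phi>_def g_cd_def if_distrib cong: if_cong)
  qed (use dominated in auto)
  moreover have "(\<lambda>k. integral {a..b} (\<lambda>t. g t * \<phi> k t)) = (\<lambda>k. 0)"
    using weak[OF \<phi>_cont \<phi>_ends] by simp
  ultimately have "integral {a..b} g_cd = 0"
    using LIMSEQ_unique tendsto_const by metis
  moreover have "integral {a..b} g_cd = integral {c..d} g"
  proof -
    have "integral {a..b} g_cd = integral UNIV (\<lambda>t. if t \<in> {a..b} then g_cd t else 0)"
      by (rule integral_restrict_UNIV[symmetric])
    also have "\<dots> = integral UNIV (\<lambda>t. if t \<in> {c..d} then g t else 0)"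
      by (rule integral_spike[of "{c, d}"]) (use cd in \<open>auto simp: g_cd_def\<close>)
    also have "\<dots> = integral {c..d} g"
      by (rule integral_restrict_UNIV)
    finally show ?thesis .
  qed
  ultimately show ?thesis by simp
next
  case False
  then show ?thesis by (metis cbox_interval content_real_eq_0 integral_null not_less)
qed

text \<open>Lebesgue differentiation: a locally integrable function all of whose interval
  integrals vanish is zero almost everywhere.\<close>
lemma ae_zero_if_interval_integrals_zero:
  fixes G :: "real \<Rightarrow> complex"
  assumes int: "\<And>u w. G integrable_on {u..w}" and zero: "\<And>u w. integral {u..w} G = 0"
  shows "AE t in lborel. G t = 0"
proof -
  obtain S where S: "negligible S"
    "\<And>x e. \<lbrakk>x \<notin> S; 0 < e\<rbrakk> \<Longrightarrow> \<exists>d>0. \<forall>h. 0 < h \<and> h < d \<longrightarrow>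
        norm (integral (cbox x (x + h *\<^sub>R One)) G /\<^sub>R h ^ DIM(real) - G x) < e"
    using integrable_ccontinuous_explicit[of G] int by (metis cbox_interval)
  have "G t = 0" if t: "t \<notin> S" for t
  proof (rule ccontr)
    assume "G t \<noteq> 0"
    then obtain d where "d > 0" and d: "\<And>h. 0 < h \<and> h < d \<Longrightarrow>
        norm (integral (cbox t (t + h *\<^sub>R One)) G /\<^sub>R h ^ DIM(real) - G t) < norm (G t)"
      using S(2)[OF t, of "norm (G t)"] by auto
    then show False
      using d[of "d / 2"] zero[of t "t + d / 2"] by simp
  qed
  moreover have "AE t in lebesgue. t \<notin> S"
    using S(1) by (intro AE_not_in) (simp add: negligible_iff_null_sets)
  ultimately show ?thesis
    by (auto simp: AE_completion_iff elim: AE_mp)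
qed

lemma fundamental_lemma_variations:
  fixes g :: "real \<Rightarrow> complex"
  assumes gm: "g \<in> borel_measurable borel" and gb: "\<And>t. norm (g t) \<le> B"
    and weak: "\<And>\<phi>. continuous_on UNIV \<phi> \<Longrightarrow> \<phi> a = 0 \<Longrightarrow> \<phi> b = 0 \<Longrightarrow>
                 integral {a..b} (\<lambda>t. g t * \<phi> t) = 0"
  shows "AE t in lborel. t \<in> {a..b} \<longrightarrow> g t = 0"
proof -
  define G where "G t = (if t \<in> {a..b} then g t else 0)" for t
  have "G integrable_on UNIV"
    unfolding G_def integrable_restrict_UNIV
    by (rule integrable_if_measurable_bounded[OF gm gb])
  then have G_int: "G integrable_on {u..w}" for u w
    by (metis cbox_interval integrable_on_subcbox subset_UNIV)
  have "integral {u..w} G = integral {max a u..min b w} g" for u w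
  proof -
    have "integral {u..w} G = integral UNIV (\<lambda>t. if t \<in> {u..w} then G t else 0)"
      by (rule integral_restrict_UNIV[symmetric])
    also have "(\<lambda>t. if t \<in> {u..w} then G t else 0) = (\<lambda>t. if t \<in> {max a u..min b w} then g t else 0)"
      by (auto simp: fun_eq_iff G_def)
    finally show ?thesis by (simp only: integral_restrict_UNIV)
  qed
  then have "integral {u..w} G = 0" for u w
    by (simp add: integral_subinterval_eq_0[OF gm gb weak])
  then have "AE t in lborel. G t = 0"
    by (rule ae_zero_if_interval_integrals_zero[OF G_int])
  then show ?thesis
    by eventually_elim (auto simp: G_def split: if_splits)
qed

text \<open>The pieces of C_pw are closed and overlap at the grid points, so its elements are
  continuous on all of [a,b].\<close>
lemma Cpw_continuous_on:
  assumes "x \<in> Cpw a b eps alpha beta" "eps > 0"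
  shows "continuous_on {a..b} x"
proof -
  define n where "n = nat \<lceil>(b - a) / eps\<rceil>"
  define U where "U l = {a + of_int l * eps .. a + (of_int l + 1) * eps} \<inter> {a..b}" for l :: int
  have "continuous_on (\<Union>l\<in>int ` {0..n}. U l) x"
    using assms by (intro continuous_on_closed_Union) (auto simp: U_def Cpw_def)
  moreover have "{a..b} \<subseteq> (\<Union>l\<in>int ` {0..n}. U l)"
  proof
    fix t assume t: "t \<in> {a..b}"
    define l where "l = \<lfloor>(t - a) / eps\<rfloor>"
    have l0: "l \<ge> 0" using t assms by (auto simp: l_def)
    have "of_int l \<le> (t - a) / eps" "(t - a) / eps < of_int l + 1" unfolding l_def by linarith+
    then have "a + of_int l * eps \<le> t" "t \<le> a + (of_int l + 1) * eps"
      using assms by (auto simp: field_simps)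
    moreover have "l \<le> \<lceil>(b - a) / eps\<rceil>" unfolding l_def using t assms
      by (intro floor_le_ceiling[THEN order_trans] ceiling_mono) (auto simp: divide_right_mono)
    ultimately show "t \<in> (\<Union>l\<in>int ` {0..n}. U l)"
      using l0 t by (auto simp: U_def n_def intro!: bexI[of _ "nat l"])
  qed
  ultimately show ?thesis by (rule continuous_on_subset)
qed

lemma coordinate_variation_in_Cpw:
  assumes "continuous_on UNIV \<phi>" "\<phi> a = 0" "\<phi> b = 0"
  shows "(\<lambda>t. upd_vec 0 j (\<phi> t)) \<in> Cpw a b eps 0 0"
proof -
  have "continuous_on UNIV (\<lambda>t. upd_vec 0 j (\<phi> t))"
    by (intro continuous_intros assms(1))
  then show ?thesis
    using assms(2,3) by (auto simp: Cpw_def vec_eq_iff intro: continuous_on_subset)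
qed

definition clamp :: "real \<Rightarrow> real \<Rightarrow> real \<Rightarrow> real" where
  "clamp a b t = max a (min b t)"

lemma clamp_in: "a \<le> b \<Longrightarrow> clamp a b t \<in> {a..b}"
  by (auto simp: clamp_def)

lemma clamp_id: "t \<in> {a..b} \<Longrightarrow> clamp a b t = t"
  by (auto simp: clamp_def)

lemma continuous_on_clamp: "continuous_on S (clamp a b)"
  unfolding clamp_def by (intro continuous_intros)

text \<open>A function continuous on [a,b] becomes continuous on the whole line after clamping the
  time variable; this gives global Borel measurability of quantities that only matter on [a,b].\<close>
lemma clamped_continuous_on:
  fixes \<Phi> :: "real \<times> 'a::topological_space \<Rightarrow> 'b::topological_space"
  assumes "a \<le> b" "continuous_on ({a..b} \<times> UNIV) \<Phi>"
  shows "continuous_on UNIV (\<lambda>p. \<Phi> (clamp a b (fst p), snd p))"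
  by (rule continuous_on_compose2[OF assms(2)])
     (auto intro!: continuous_intros continuous_on_compose2[OF continuous_on_clamp] clamp_in assms(1))

lemma clamped_comp_measurable_bounded:
  fixes \<Phi> :: "real \<times> 'a::euclidean_space \<Rightarrow> 'b::euclidean_space"
  assumes ab: "a \<le> b" and \<Phi>: "continuous_on ({a..b} \<times> UNIV) \<Phi>"
    and Y: "Y \<in> borel_measurable borel" "\<And>t. norm (Y t) \<le> R"
  shows "(\<lambda>t. \<Phi> (clamp a b t, Y t)) \<in> borel_measurable borel"
    and "\<exists>B. \<forall>t. norm (\<Phi> (clamp a b t, Y t)) \<le> B"
proof -
  show "(\<lambda>t. \<Phi> (clamp a b t, Y t)) \<in> borel_measurable borel"
    using measurable_compose[OF _ borel_measurable_continuous_onI[OF clamped_continuous_on[OF ab \<Phi>]],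
        of "\<lambda>t. (t, Y t)"] Y(1) by simp
  have "compact (\<Phi> ` ({a..b} \<times> cball 0 R))"
    by (intro compact_continuous_image continuous_on_subset[OF \<Phi>] compact_Times) auto
  then obtain B where B: "\<And>z. z \<in> \<Phi> ` ({a..b} \<times> cball 0 R) \<Longrightarrow> norm z \<le> B"
    by (meson compact_imp_bounded bounded_iff)
  have "norm (\<Phi> (clamp a b t, Y t)) \<le> B" for t
    using B clamp_in[OF ab, of t] Y(2)[of t] by auto
  then show "\<exists>B. \<forall>t. norm (\<Phi> (clamp a b t, Y t)) \<le> B" by blast
qed

lemma continuous_on_interval_bounded:
  fixes f :: "real \<Rightarrow> 'b::real_normed_vector"
  assumes "continuous_on {a..b} f"
  obtains B where "B > 0" "\<And>t. t \<in> {a..b} \<Longrightarrow> norm (f t) \<le> B"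
  using compact_imp_bounded[OF compact_continuous_image[OF assms compact_Icc]]
  unfolding bounded_pos by auto

lemma norm_vec_le_sum_components: "norm (x :: 'a::real_normed_vector^'n) \<le> (\<Sum>i\<in>UNIV. norm (x $ i))"
  by (simp add: norm_vec_def L2_set_le_sum)

text \<open>A critical point x of the discrete action and a fixed coordinate j.\<close>
locale critical_point =
  fixes a b eps :: real and N :: nat and c :: "int \<Rightarrow> complex"
    and L :: "real \<Rightarrow> complex^'d \<Rightarrow> complex^'d \<Rightarrow> complex"
    and x :: "real \<Rightarrow> complex^'d" and j :: 'd
  assumes ab: "a < b"
    and L_cont: "continuous_on ({a..b} \<times> UNIV \<times> UNIV) (\<lambda>(t, y, v). L t y v)"
    and hol_x: "\<And>t y v. t \<in> {a..b} \<Longrightarrow> (\<lambda>z. L t (upd_vec y j z) v) field_differentiable (at (y $ j))"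
    and hol_v: "\<And>t y v. t \<in> {a..b} \<Longrightarrow> (\<lambda>z. L t y (upd_vec v j z)) field_differentiable (at (v $ j))"
    and dLx_cont: "continuous_on ({a..b} \<times> UNIV \<times> UNIV) (\<lambda>(t, y, v). dL_dx L j t y v)"
    and dLv_cont: "continuous_on ({a..b} \<times> UNIV \<times> UNIV) (\<lambda>(t, y, v). dL_dv L j t y v)"
    and x_cont: "continuous_on {a..b} x"
    and critical: "\<And>h. h \<in> Cpw a b eps 0 0 \<Longrightarrow>
        ((\<lambda>\<eta>::real. action_disc a b eps N c L (\<lambda>t. x t + \<eta> *\<^sub>R h t)) has_vector_derivative 0) (at 0)"
begin

text \<open>X and the
  time argument of P, Q are clamped to [a,b] so that they are globally measurable and bounded;
  on [a,b] nothing changes.\<close>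
definition X :: "real \<Rightarrow> complex^'d" where "X t = x (clamp a b t)"
definition V :: "real \<Rightarrow> complex^'d" where "V t = box_eps a b eps N c x t"
definition P :: "real \<Rightarrow> complex" where "P t = dL_dx L j (clamp a b t) (X t) (V t)"
definition Q :: "real \<Rightarrow> complex" where "Q t = dL_dv L j (clamp a b t) (X t) (V t)"

lemma X_eq: "t \<in> {a..b} \<Longrightarrow> X t = x t"
  by (simp add: X_def clamp_id)

lemma P_eq: "t \<in> {a..b} \<Longrightarrow> P t = dL_dx L j t (x t) (V t)"
  by (simp add: P_def clamp_id X_eq)

lemma Q_eq: "t \<in> {a..b} \<Longrightarrow> Q t = dL_dv L j t (x t) (V t)"
  by (simp add: Q_def clamp_id X_eq)

lemma X_continuous: "continuous_on UNIV X"
  unfolding X_def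
  by (rule continuous_on_compose2[OF x_cont continuous_on_clamp]) (use clamp_in ab in auto)

lemma V_eq_X: "V t = box_eps a b eps N c X t"
  unfolding V_def box_eps_def
  by (auto intro!: sum.cong simp: vec_eq_iff X_eq chi_set_shift[of t a b eps "- _", simplified])

lemma V_measurable: "V \<in> borel_measurable borel"
  unfolding V_eq_X[abs_def] by (intro box_eps_measurable borel_measurable_continuous_onI X_continuous)

lemma state_bounded:
  obtains R where "\<And>t. norm (X t) \<le> R" "\<And>t. norm (V t) \<le> R"
proof -
  obtain R0 where R0: "R0 > 0" "\<And>t. t \<in> {a..b} \<Longrightarrow> norm (x t) \<le> R0"
    using continuous_on_interval_bounded[OF x_cont] by blast
  have X_le: "norm (X t) \<le> R0" for t
    using R0(2)[OF clamp_in] ab by (simp add: X_def)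
  define R1 where "R1 = CARD('d) * ((\<Sum>l\<in>{-int N..int N}. norm (c l)) * R0)"
  have "norm (V t) \<le> R1" for t
  proof -
    have "norm (V t) \<le> (\<Sum>i\<in>UNIV. norm (box_meps a b (-eps) N c (\<lambda>s. X s $ i) t))"
      using norm_vec_le_sum_components[of "V t"] by (simp add: V_eq_X box_eps_component)
    also have "\<dots> \<le> (\<Sum>i\<in>(UNIV::'d set). (\<Sum>l\<in>{-int N..int N}. norm (c l)) * R0)"
      using R0(1) order_trans[OF Finite_Cartesian_Product.norm_nth_le X_le] by (intro sum_mono box_meps_bound) auto
    finally show ?thesis by (simp add: R1_def)
  qed
  then show ?thesis
    using that[of "max R0 R1"] X_le by (meson max.coboundedI1 max.coboundedI2 order_trans)
qed

lemma partials_measurable_bounded: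
  shows "P \<in> borel_measurable borel" "Q \<in> borel_measurable borel"
    and "\<exists>B. \<forall>t. norm (P t) \<le> B" "\<exists>B. \<forall>t. norm (Q t) \<le> B"
proof -
  obtain R where R: "\<And>t. norm (X t) \<le> R" "\<And>t. norm (V t) \<le> R"
    using state_bounded by blast
  have Y: "(\<lambda>t. (X t, V t)) \<in> borel_measurable borel" "norm (X t, V t) \<le> R + R" for t
    using borel_measurable_continuous_onI[OF X_continuous] V_measurable
      order_trans[OF norm_Pair_le add_mono[OF R(1) R(2)]] by auto
  note P_props = clamped_comp_measurable_bounded[OF less_imp_le[OF ab] dLx_cont[unfolded UNIV_Times_UNIV] Y(1) Y(2)]
  note Q_props = clamped_comp_measurable_bounded[OF less_imp_le[OF ab] dLv_cont[unfolded UNIV_Times_UNIV] Y(1) Y(2)]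
  show "P \<in> borel_measurable borel" "\<exists>B. \<forall>t. norm (P t) \<le> B"
    using P_props by (simp_all add: P_def[abs_def])
  show "Q \<in> borel_measurable borel" "\<exists>B. \<forall>t. norm (Q t) \<le> B"
    using Q_props by (simp_all add: Q_def[abs_def])
qed

lemma test_function_bounded:
  assumes "continuous_on UNIV \<phi>"
  obtains M where "M > 0" "\<And>t. t \<in> {a..b} \<Longrightarrow> norm (\<phi> t) \<le> M"
    "\<And>t. norm (box_meps a b (-eps) N c \<phi> t) \<le> M"
proof -
  obtain M where M: "M > 0" "\<And>t. t \<in> {a..b} \<Longrightarrow> norm (\<phi> t) \<le> M"
    using continuous_on_interval_bounded[OF continuous_on_subset[OF assms]] by blast
  define C where "C = (\<Sum>l\<in>{-int N..int N}. norm (c l))"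
  have C: "C \<ge> 0" by (simp add: C_def sum_nonneg)
  have "norm (box_meps a b (-eps) N c \<phi> t) \<le> C * M" for t
    using box_meps_bound[OF M(2)] M(1) by (simp add: C_def)
  moreover have "M \<le> M + C * M" "C * M \<le> M + C * M" "M + C * M > 0"
    using M(1) C by (simp_all add: add_pos_nonneg)
  ultimately show ?thesis
    using that[of "M + C * M"] M(2) by (meson order_trans)
qed

definition varied :: "(real \<Rightarrow> complex) \<Rightarrow> real \<Rightarrow> real \<Rightarrow> complex" where
  "varied \<phi> \<eta> t = L t (upd_vec (x t) j (x t $ j + of_real \<eta> * \<phi> t))
                        (upd_vec (V t) j (V t $ j + of_real \<eta> * box_meps a b (-eps) N c \<phi> t))"

lemma action_variation:
  "action_disc a b eps N c L (\<lambda>t. x t + \<eta> *\<^sub>R upd_vec 0 j (\<phi> t)) = integral {a..b} (varied \<phi> \<eta>)"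
  unfolding action_disc_def box_eps_variation unfolding add_scaleR_upd_vec_zero varied_def V_def ..

text \<open>The varied integrand is integrable: on [a,b] it is a continuous function of time and of
  the bounded measurable quantities x, box x and box_{-eps} phi.\<close>
lemma varied_integrable:
  assumes \<phi>: "continuous_on UNIV \<phi>"
  shows "varied \<phi> \<eta> integrable_on {a..b}"
proof -
  define \<psi> where "\<psi> = box_meps a b (-eps) N c \<phi>"
  define \<Phi> where "\<Phi> p = (\<lambda>(t, y, v). L t y v)
       (fst p, upd_vec (fst (snd p)) j (fst (snd p) $ j + of_real \<eta> * \<phi> (fst p)),
        upd_vec (fst (snd (snd p))) j (fst (snd (snd p)) $ j + of_real \<eta> * snd (snd (snd p))))"
    for p :: "real \<times> (complex^'d) \<times> (complex^'d) \<times> complex"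
  have \<Phi>_cont: "continuous_on ({a..b} \<times> UNIV) \<Phi>"
    unfolding \<Phi>_def
    by (rule continuous_on_compose2[OF L_cont])
       (auto intro!: continuous_intros continuous_on_compose2[OF \<phi>])
  obtain R where R: "\<And>t. norm (X t) \<le> R" "\<And>t. norm (V t) \<le> R"
    using state_bounded by blast
  obtain M where M: "\<And>t. norm (\<psi> t) \<le> M"
    using test_function_bounded[OF \<phi>] unfolding \<psi>_def by blast
  have Y_meas: "(\<lambda>t. (X t, V t, \<psi> t)) \<in> borel_measurable borel"
    using borel_measurable_continuous_onI[OF X_continuous] V_measurable
      box_meps_measurable[OF borel_measurable_continuous_onI[OF \<phi>]] by (simp add: \<psi>_def)
  have Y_bound: "norm (X t, V t, \<psi> t) \<le> R + (R + M)" for t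
    by (rule order_trans[OF norm_Pair_le add_mono[OF R(1) order_trans[OF norm_Pair_le add_mono[OF R(2) M]]]])
  note clamped = clamped_comp_measurable_bounded[OF less_imp_le[OF ab] \<Phi>_cont Y_meas Y_bound]
  obtain B where "\<And>t. norm (\<Phi> (clamp a b t, X t, V t, \<psi> t)) \<le> B"
    using clamped(2) by blast
  then have "(\<lambda>t. \<Phi> (clamp a b t, X t, V t, \<psi> t)) integrable_on {a..b}"
    by (intro integrable_if_measurable_bounded[OF clamped(1)])
  then show ?thesis
    by (rule integrable_eq) (simp only: \<Phi>_def varied_def \<psi>_def clamp_id X_eq prod.case fst_conv snd_conv)
qed

lemma varied_expansion:
  assumes \<phi>: "continuous_on UNIV \<phi>" and e: "e > 0"
  shows "\<exists>\<delta>>0. \<forall>\<eta> t. \<bar>\<eta>\<bar> < \<delta> \<longrightarrow> t \<in> {a..b} \<longrightarrow>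
    norm (varied \<phi> \<eta> t - varied \<phi> 0 t - \<eta> *\<^sub>R (P t * \<phi> t + Q t * box_meps a b (-eps) N c \<phi> t))
      \<le> e * \<bar>\<eta>\<bar>"
proof -
  obtain R where R: "\<And>t. norm (X t) \<le> R" "\<And>t. norm (V t) \<le> R"
    using state_bounded by blast
  obtain M where M: "M > 0" "\<And>t. t \<in> {a..b} \<Longrightarrow> norm (\<phi> t) \<le> M"
    "\<And>t. norm (box_meps a b (-eps) N c \<phi> t) \<le> M"
    using test_function_bounded[OF \<phi>] by blast
  have "e / (2 * M) > 0" using e M(1) by simp
  then obtain \<delta> where \<delta>: "\<delta> > 0"
    "\<forall>t\<in>{a..b}. \<forall>y v p q. norm y \<le> R \<longrightarrow> norm v \<le> R \<longrightarrow> norm p \<le> \<delta> \<longrightarrow> norm q \<le> \<delta> \<longrightarrow>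
       norm (L t (upd_vec y j (y $ j + p)) (upd_vec v j (v $ j + q)) - L t y v
             - (dL_dx L j t y v * p + dL_dv L j t y v * q)) \<le> e / (2 * M) * (norm p + norm q)"
    using lagrangian_uniform_expansion[OF compact_Icc hol_x hol_v dLx_cont dLv_cont] by blast
  have bound: "norm (varied \<phi> \<eta> t - varied \<phi> 0 t - \<eta> *\<^sub>R (P t * \<phi> t + Q t * box_meps a b (-eps) N c \<phi> t))
      \<le> e * \<bar>\<eta>\<bar>" if \<eta>: "\<bar>\<eta>\<bar> < \<delta> / M" and t: "t \<in> {a..b}" for \<eta> t
  proof -
    define p where "p = of_real \<eta> * \<phi> t"
    define q where "q = of_real \<eta> * box_meps a b (-eps) N c \<phi> t"
    have "\<bar>\<eta>\<bar> * M \<le> \<delta>" using \<eta> M(1) by (simp add: field_simps)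
    moreover have pq: "norm p \<le> \<bar>\<eta>\<bar> * M" "norm q \<le> \<bar>\<eta>\<bar> * M"
      using M(2)[OF t] M(3)[of t] by (simp_all add: p_def q_def norm_mult mult_left_mono)
    ultimately have "norm p \<le> \<delta>" "norm q \<le> \<delta>" by linarith+
    moreover have "norm (x t) \<le> R" using R(1)[of t] by (simp add: X_eq[OF t])
    moreover have "varied \<phi> \<eta> t - varied \<phi> 0 t - \<eta> *\<^sub>R (P t * \<phi> t + Q t * box_meps a b (-eps) N c \<phi> t)
        = L t (upd_vec (x t) j (x t $ j + p)) (upd_vec (V t) j (V t $ j + q)) - L t (x t) (V t)
          - (dL_dx L j t (x t) (V t) * p + dL_dv L j t (x t) (V t) * q)"
      by (simp add: varied_def p_def q_def P_eq[OF t] Q_eq[OF t] scaleR_conv_of_real algebra_simps)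
    ultimately have "norm (varied \<phi> \<eta> t - varied \<phi> 0 t - \<eta> *\<^sub>R (P t * \<phi> t + Q t * box_meps a b (-eps) N c \<phi> t))
        \<le> e / (2 * M) * (norm p + norm q)"
      using \<delta>(2) t R(2)[of t] by simp
    also have "\<dots> \<le> e / (2 * M) * (2 * (\<bar>\<eta>\<bar> * M))"
      using pq e M(1) by (intro mult_left_mono) auto
    also have "\<dots> = e * \<bar>\<eta>\<bar>" using M(1) by (simp add: field_simps)
    finally show ?thesis .
  qed
  show ?thesis
    by (rule exI[of _ "\<delta> / M"]) (use bound \<delta>(1) M(1) in auto)
qed

lemma first_variation:
  assumes \<phi>: "continuous_on UNIV \<phi>" "\<phi> a = 0" "\<phi> b = 0"
  shows "integral {a..b} (\<lambda>t. P t * \<phi> t + Q t * box_meps a b (-eps) N c \<phi> t) = 0"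
proof -
  obtain BP BQ where BP: "\<And>t. norm (P t) \<le> BP" and BQ: "\<And>t. norm (Q t) \<le> BQ"
    using partials_measurable_bounded(3,4) by blast
  obtain M where M: "\<And>t. t \<in> {a..b} \<Longrightarrow> norm (\<phi> t) \<le> M" "\<And>t. norm (box_meps a b (-eps) N c \<phi> t) \<le> M"
    using test_function_bounded[OF \<phi>(1)] by blast
  have \<phi>_meas: "\<phi> \<in> borel_measurable borel" "box_meps a b (-eps) N c \<phi> \<in> borel_measurable borel"
    using borel_measurable_continuous_onI[OF \<phi>(1)] by (auto intro: box_meps_measurable)
  have D_int: "(\<lambda>t. P t * \<phi> t + Q t * box_meps a b (-eps) N c \<phi> t) integrable_on {a..b}"
    using partials_measurable_bounded(1,2) \<phi>_meas BP BQ M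
    by (intro integrable_add integrable_product_if_measurable_bounded) auto
  have "((\<lambda>\<eta>. integral {a..b} (varied \<phi> \<eta>)) has_vector_derivative
          integral {a..b} (\<lambda>t. P t * \<phi> t + Q t * box_meps a b (-eps) N c \<phi> t)) (at 0)"
    using ab varied_integrable[OF \<phi>(1)] D_int varied_expansion[OF \<phi>(1)]
    by (intro has_vector_derivative_integral_at_0) auto
  moreover have "((\<lambda>\<eta>. integral {a..b} (varied \<phi> \<eta>)) has_vector_derivative 0) (at 0)"
    using critical[OF coordinate_variation_in_Cpw[where j = j, OF \<phi>]] unfolding action_variation .
  ultimately show ?thesis by (rule vector_derivative_unique_at)
qed

text \<open>Step (2): the weak Euler-Lagrange equation, after moving the scale derivative onto Q.\<close>
lemma euler_lagrange_weak:
  assumes \<phi>: "continuous_on UNIV \<phi>" "\<phi> a = 0" "\<phi> b = 0"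
  shows "integral {a..b} (\<lambda>t. (box_meps a b eps N c Q t + P t) * \<phi> t) = 0"
proof -
  define \<psi> where "\<psi> = box_meps a b (-eps) N c \<phi>"
  obtain BP BQ where BP: "\<And>t. norm (P t) \<le> BP" and BQ: "\<And>t. norm (Q t) \<le> BQ"
    using partials_measurable_bounded(3,4) by blast
  obtain M where M: "\<And>t. t \<in> {a..b} \<Longrightarrow> norm (\<phi> t) \<le> M" "\<And>t. norm (\<psi> t) \<le> M"
    using test_function_bounded[OF \<phi>(1)] unfolding \<psi>_def by blast
  have BQ0: "BQ \<ge> 0" using BQ[of a] norm_ge_zero order_trans by blast
  have meas: "\<phi> \<in> borel_measurable borel" "\<psi> \<in> borel_measurable borel"
      "box_meps a b eps N c Q \<in> borel_measurable borel"
    using borel_measurable_continuous_onI[OF \<phi>(1)] partials_measurable_bounded(2)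
    by (auto simp: \<psi>_def intro: box_meps_measurable)
  note PQ_meas = partials_measurable_bounded(1,2)
  have int_P: "(\<lambda>t. P t * \<phi> t) integrable_on {a..b}"
    using PQ_meas meas BP M by (intro integrable_product_if_measurable_bounded) auto
  have int_Q: "(\<lambda>t. Q t * \<psi> t) integrable_on {a..b}"
    using PQ_meas meas BQ M by (intro integrable_product_if_measurable_bounded) auto
  have int_boxQ: "(\<lambda>t. box_meps a b eps N c Q t * \<phi> t) integrable_on {a..b}"
    using meas M box_meps_bound[OF BQ BQ0]
    by (intro integrable_product_if_measurable_bounded) auto
  have "integral {a..b} (\<lambda>t. Q t * \<psi> t) = integral {a..b} (\<lambda>t. box_meps a b eps N c Q t * \<phi> t)"
    unfolding \<psi>_def using PQ_meas(2) meas(1) BQ M(1)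
    by (intro box_meps_adjoint[where B = "max BQ M"]) (auto intro: le_max_iff_disj[THEN iffD2])
  then have "integral {a..b} (\<lambda>t. (box_meps a b eps N c Q t + P t) * \<phi> t)
      = integral {a..b} (\<lambda>t. P t * \<phi> t + Q t * \<psi> t)"
    using int_P int_Q int_boxQ by (simp add: integral_add distrib_right add.commute)
  also have "\<dots> = 0"
    unfolding \<psi>_def by (rule first_variation[OF \<phi>])
  finally show ?thesis .
qed

lemma euler_lagrange_ae:
  "AE t in lborel. t \<in> {a..b} \<longrightarrow>
      box_meps a b eps N c (\<lambda>s. dL_dv L j s (x s) (box_eps a b eps N c x s)) t
      + dL_dx L j t (x t) (box_eps a b eps N c x t) = 0"
proof -
  obtain BP BQ where BP: "\<And>t. norm (P t) \<le> BP" and BQ: "\<And>t. norm (Q t) \<le> BQ"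
    using partials_measurable_bounded(3,4) by blast
  have BQ0: "BQ \<ge> 0" using BQ[of a] norm_ge_zero order_trans by blast
  define C where "C = (\<Sum>l\<in>{-int N..int N}. norm (c l))"
  have "norm (box_meps a b eps N c Q t + P t) \<le> C * BQ + BP" for t
    using norm_triangle_le[OF add_mono[OF box_meps_bound[OF BQ BQ0] BP]] by (simp add: C_def)
  then have "AE t in lborel. t \<in> {a..b} \<longrightarrow> box_meps a b eps N c Q t + P t = 0"
    using partials_measurable_bounded(1,2) euler_lagrange_weak
    by (intro fundamental_lemma_variations borel_measurable_add box_meps_measurable) auto
  then show ?thesis
  proof eventually_elim
    case (elim t)
    have "box_meps a b eps N c Q t = box_meps a b eps N c (\<lambda>s. dL_dv L j s (x s) (box_eps a b eps N c x s)) t"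
      unfolding box_meps_def by (auto intro!: sum.cong simp: Q_eq[OF chi_set_shift] V_def)
    then show ?case using elim by (simp add: P_eq V_def)
  qed
qed

end

theorem mainTheorem2:
  fixes a b eps :: real and N :: nat and c :: "int \<Rightarrow> complex"
    and alpha beta :: "complex^'d"
    and L :: "real \<Rightarrow> complex^'d \<Rightarrow> complex^'d \<Rightarrow> complex"
    and x :: "real \<Rightarrow> complex^'d"
  assumes ab: "a < b" and eps: "eps > 0" and N: "N \<ge> 1"
    and L_cont: "continuous_on ({a..b} \<times> UNIV \<times> UNIV) (\<lambda>(t, y, v). L t y v)"
    and L_hol_x: "\<And>t y v j. t \<in> {a..b} \<Longrightarrow> (\<lambda>z. L t (upd_vec y j z) v) field_differentiable (at (y $ j))"
    and L_hol_v: "\<And>t y v j. t \<in> {a..b} \<Longrightarrow> (\<lambda>z. L t y (upd_vec v j z)) field_differentiable (at (v $ j))"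
    and dLx_cont: "\<And>j. continuous_on ({a..b} \<times> UNIV \<times> UNIV) (\<lambda>(t, y, v). dL_dx L j t y v)"
    and dLv_cont: "\<And>j. continuous_on ({a..b} \<times> UNIV \<times> UNIV) (\<lambda>(t, y, v). dL_dv L j t y v)"
    and x_pw: "x \<in> Cpw a b eps alpha beta"
    and critical: "\<And>h. h \<in> Cpw a b eps 0 0 \<Longrightarrow>
        ((\<lambda>\<eta>::real. action_disc a b eps N c L (\<lambda>t. x t + \<eta> *\<^sub>R h t)) has_vector_derivative 0) (at 0)"
  shows "\<forall>j. AE t in lborel. t \<in> {a..b} \<longrightarrow>
      box_meps a b eps N c (\<lambda>s. dL_dv L j s (x s) (box_eps a b eps N c x s)) t
      + dL_dx L j t (x t) (box_eps a b eps N c x t) = 0"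
proof
  fix j :: 'd
  have "continuous_on {a..b} x"
    using Cpw_continuous_on[OF x_pw eps] .
  then interpret critical_point a b eps N c L x j
    using ab L_cont L_hol_x L_hol_v dLx_cont dLv_cont critical by unfold_locales
  show "AE t in lborel. t \<in> {a..b} \<longrightarrow>
      box_meps a b eps N c (\<lambda>s. dL_dv L j s (x s) (box_eps a b eps N c x s)) t
      + dL_dx L j t (x t) (box_eps a b eps N c x t) = 0"
    by (rule euler_lagrange_ae)
qed

end
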